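(* Consider a \textsc{Brick+} payment channel, as described in the context, under its system model. Then \textsc{Brick+} achieves liveness under asynchrony: every valid operation (update or close) on the state of the channel is eventually either committed or invalidated.
   Context: Setting and model. Two channel parties $A,B$, a committee of Wardens $W_1,\dots,W_n$ with $n=3f+1$, at most $f$ Byzantine and the others honest, threshold $t=2f+1$, and an external auditor. Participants are computationally bounded; communication channels are secure, the hash function $H$ is cryptographically secure, signatures unforgeable. The blockchain supports smart contracts and satisfies persistence and liveness (a transaction given to all honest parties long enough is eventually included). The network is asynchronous (every message between honest parties is eventually delivered, no known bound). The richest channel party is rational and will not deviate from honest behavior if it would be discovered and punished; the auditor is rational. States have sequence numbers $1,2,\dots$; $s_i$ is the state with sequence number $i$; $\sigma(\cdot)$ is the joint signature of $A$ and $B$. Protocol \textsc{Brick+}. Open: parties sign and publish $open(H(W_1),\dots,H(W_n),t,s_1,F)$; Wardens lock collateral. Update: given the previous hash-chain head $H_p$, parties sign and exchange $H_s=H(H_p,H(s_i,r_i),i)$ with random $r_i$, forming the announcement $\{M,\sigma(M),H_s\}$, $M=i$. Consistent Broadcast: each party sends the announcement to all Wardens; a Warden checks both signatures and that the sequence number is exactly one higher than stored; if it has already published a closing announcement it ignores the update, otherwise it stores the announcement, signs $M$, and returns the signature; a party considers the state committed once it holds $t$ Warden signatures. Optimistic Close is disabled. Pessimistic Close: on a closing request each Warden publishes on-chain its signed stored announcement with a close flag and stops signing updates; once $t$ are on-chain the party publishes the state $s_i$ with the maximum announced sequence number, $r_i$, and the parties' signatures; the smart contract verifies and closes the channel in $s_i$.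 Audit: the auditor posts an access request on-chain; Wardens verify it and run Pessimistic Close; parties send the state history to the auditor, who verifies it against the published hash-chain head. Definitions. A state $s_i$ is valid if both parties have signed it, it is the freshest (no valid $s_{i+1}$), and it has not been invalidated (invalidated if the channel closes in $s_{i-1}$). A state is committed if signed by at least $2f+1$ Wardens, or valid and in a block in the persistent part of the blockchain. Liveness: any valid operation (update, close) on the channel state will eventually be committed or invalidated. *)

theory Defs
  imports Main
begin

text \<open>Abstract operational model of the Brick+ channel (Consistent Broadcast + Pessimistic Close
  + audit-triggered close), with idealized cryptography.  Wardens are the numbers below nW f;
  the Byzantine wardens form the set B.\<close>

definition nW :: "nat \<Rightarrow> nat" where "nW f = 3 * f + 1"
definition thr :: "nat \<Rightarrow> nat" where "thr f = 2 * f + 1"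

record cfg =
  c_lat    :: nat                      \<comment> \<open>sequence number of the latest state jointly signed by A and B\<close>
  c_st     :: "nat \<Rightarrow> nat"             \<comment> \<open>sequence number stored by each (honest) warden\<close>
  c_cl     :: "nat \<Rightarrow> bool"            \<comment> \<open>warden has published its closing announcement\<close>
  c_sg     :: "nat \<Rightarrow> nat set"         \<comment> \<open>wardens whose signature on announcement i the parties hold\<close>
  c_net    :: "(nat \<times> nat) set"         \<comment> \<open>update announcements (warden, seq) in transit\<close>
  c_req    :: "nat set"                 \<comment> \<open>wardens to which a closing/access request is in transit\<close>
  c_txs    :: "(nat \<times> nat) set"         \<comment> \<open>closing announcements (warden, seq) submitted, not yet on chain\<close>
  c_onch   :: "nat \<Rightarrow> nat option"      \<comment> \<open>closing announcement of each warden on chain\<close>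
  c_closed :: "nat option"              \<comment> \<open>channel closed on chain in the state with this sequence number\<close>

datatype act =
    Issue                 \<comment> \<open>parties sign the next state and send its announcement to all wardens\<close>
  | Deliver nat nat       \<comment> \<open>honest warden w processes the announcement with sequence number i\<close>
  | ByzSign nat nat       \<comment> \<open>Byzantine warden signs announcement i\<close>
  | ByzPost nat nat       \<comment> \<open>Byzantine warden submits a closing announcement for existing state j\<close>
  | Request               \<comment> \<open>a party (closing request) or the auditor (access request) triggers close\<close>
  | RecvReq nat           \<comment> \<open>honest warden w receives the closing/access request\<close>
  | Include nat nat       \<comment> \<open>closing announcement of warden w for state j is included in a block\<close>
  | Finalize              \<comment> \<open>party publishes the max announced state; the contract closes the channel\<close>
  | Idle

definition ann :: "cfg \<Rightarrow> nat set" where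
  "ann c = {j. \<exists>w. c_onch c w = Some j}"

definition init :: "cfg \<Rightarrow> bool" where
  "init c \<longleftrightarrow> c = \<lparr> c_lat = 1, c_st = (\<lambda>_. 1), c_cl = (\<lambda>_. False), c_sg = (\<lambda>_. {}),
      c_net = {}, c_req = {}, c_txs = {}, c_onch = (\<lambda>_. None), c_closed = None \<rparr>"

definition step :: "nat \<Rightarrow> nat set \<Rightarrow> cfg \<Rightarrow> act \<Rightarrow> cfg \<Rightarrow> bool" where
  "step f B c a c' = (case a of
     Issue \<Rightarrow> c_closed c = None \<and> (c_lat c = 1 \<or> thr f \<le> card (c_sg c (c_lat c))) \<and>
        c' = c\<lparr>c_lat := Suc (c_lat c),
               c_net := c_net c \<union> {(w, Suc (c_lat c)) | w. w < nW f}\<rparr>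
   | Deliver w i \<Rightarrow> w \<notin> B \<and> w < nW f \<and> (w, i) \<in> c_net c \<and> (c_cl c w \<or> i \<le> Suc (c_st c w)) \<and>
        c' = (if \<not> c_cl c w \<and> i = Suc (c_st c w)
              then c\<lparr>c_net := c_net c - {(w, i)}, c_st := (c_st c)(w := i),
                     c_sg := (c_sg c)(i := insert w (c_sg c i))\<rparr>
              else c\<lparr>c_net := c_net c - {(w, i)}\<rparr>)
   | ByzSign w i \<Rightarrow> w \<in> B \<and> i \<le> c_lat c \<and> c' = c\<lparr>c_sg := (c_sg c)(i := insert w (c_sg c i))\<rparr>
   | ByzPost w j \<Rightarrow> w \<in> B \<and> 1 \<le> j \<and> j \<le> c_lat c \<and> c' = c\<lparr>c_txs := insert (w, j) (c_txs c)\<rparr>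
   | Request \<Rightarrow> c_closed c = None \<and> c' = c\<lparr>c_req := {w. w < nW f}\<rparr>
   | RecvReq w \<Rightarrow> w \<notin> B \<and> w \<in> c_req c \<and>
        c' = (if c_cl c w then c\<lparr>c_req := c_req c - {w}\<rparr>
              else c\<lparr>c_req := c_req c - {w}, c_cl := (c_cl c)(w := True),
                     c_txs := insert (w, c_st c w) (c_txs c)\<rparr>)
   | Include w j \<Rightarrow> (w, j) \<in> c_txs c \<and>
        c' = c\<lparr>c_txs := c_txs c - {(w, j)},
               c_onch := (if c_onch c w = None then (c_onch c)(w := Some j) else c_onch c)\<rparr>
   | Finalize \<Rightarrow> c_closed c = None \<and> thr f \<le> card {w. c_onch c w \<noteq> None} \<and>
        c' = c\<lparr>c_closed := Some (Max (ann c))\<rparr>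
   | Idle \<Rightarrow> c' = c)"

definition enabled :: "nat \<Rightarrow> nat set \<Rightarrow> cfg \<Rightarrow> act \<Rightarrow> bool" where
  "enabled f B c a \<longleftrightarrow> (\<exists>c'. step f B c a c')"

definition weakly_fair :: "nat \<Rightarrow> nat set \<Rightarrow> (nat \<Rightarrow> cfg) \<Rightarrow> (nat \<Rightarrow> act) \<Rightarrow> act \<Rightarrow> bool" where
  "weakly_fair f B r l a \<longleftrightarrow>
     (\<forall>k. (\<forall>k'\<ge>k. enabled f B (r k') a) \<longrightarrow> (\<exists>k'\<ge>k. l k' = a))"

text \<open>Admissible asynchronous executions: eventual delivery to honest wardens, blockchain
  liveness for honest submissions, and the party eventually publishing the closing state.
  Issue, Request and all Byzantine actions are unconstrained.\<close>
definition brick_run :: "nat \<Rightarrow> nat set \<Rightarrow> (nat \<Rightarrow> cfg) \<Rightarrow> (nat \<Rightarrow> act) \<Rightarrow> bool" where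
  "brick_run f B r l \<longleftrightarrow>
     init (r 0) \<and> (\<forall>k. step f B (r k) (l k) (r (Suc k))) \<and>
     (\<forall>w i. w \<notin> B \<longrightarrow> weakly_fair f B r l (Deliver w i)) \<and>
     (\<forall>w. w \<notin> B \<longrightarrow> weakly_fair f B r l (RecvReq w)) \<and>
     (\<forall>w j. w \<notin> B \<longrightarrow> weakly_fair f B r l (Include w j)) \<and>
     weakly_fair f B r l Finalize"

definition committed :: "nat \<Rightarrow> cfg \<Rightarrow> nat \<Rightarrow> bool" where
  "committed f c i \<longleftrightarrow> thr f \<le> card (c_sg c i) \<or> c_closed c = Some i"

definition invalidated :: "cfg \<Rightarrow> nat \<Rightarrow> bool" where
  "invalidated c i \<longleftrightarrow> c_closed c = Some (i - 1)"

end

theory Submission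
  imports Defs
begin

(* A quorum is any 2f+1 of the 3f+1 wardens, so two quorums share an honest warden.  An honest
   warden signs announcement i only after storing i, and the closing announcement it publishes
   carries the number it stores; hence once a quorum of closing announcements is on chain, their
   maximum is at least every state signed by a quorum.  The parties issue a new state only after
   the current one is committed, so an uncommitted latest state L stays the latest forever, and
   a close can only land on L (committing it) or on L - 1 (invalidating it).
   Weak fairness provides the progress: after a closing request every honest warden eventually
   gets its closing announcement on chain, which is a quorum and lets the channel be finalized;
   if the channel never closes, no warden ever stops signing, so all honest wardens eventually
   store and sign L, which commits it. *)

definition wardens_in_range :: "nat \<Rightarrow> cfg \<Rightarrow> bool" where
  "wardens_in_range f c \<longleftrightarrow>
     c_req c \<subseteq> {..<nW f} \<and> fst ` c_txs c \<subseteq> {..<nW f} \<and> {w. c_onch c w \<noteq> None} \<subseteq> {..<nW f} \<and>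
     (\<forall>i. c_sg c i \<subseteq> {..<nW f})"

definition seqnos_in_range :: "nat set \<Rightarrow> cfg \<Rightarrow> bool" where
  "seqnos_in_range B c \<longleftrightarrow>
     1 \<le> c_lat c \<and> snd ` c_net c \<subseteq> {..c_lat c} \<and> snd ` c_txs c \<subseteq> {1..c_lat c} \<and>
     ann c \<subseteq> {1..c_lat c} \<and> (\<forall>w. w \<notin> B \<longrightarrow> c_st c w \<in> {1..c_lat c})"

(* State 1 is fixed at opening and never announced, so honest signatures start at 2. *)
definition honest_signatures :: "nat set \<Rightarrow> cfg \<Rightarrow> bool" where
  "honest_signatures B c \<longleftrightarrow> (\<forall>w i. w \<notin> B \<longrightarrow> w \<in> c_sg c i \<longleftrightarrow> i \<in> {2..c_st c w})"

definition honest_closing :: "nat set \<Rightarrow> cfg \<Rightarrow> bool" where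
  "honest_closing B c \<longleftrightarrow> (\<forall>w. w \<notin> B \<longrightarrow>
     (\<forall>j. (w, j) \<in> c_txs c \<or> c_onch c w = Some j \<longrightarrow> c_cl c w \<and> j = c_st c w) \<and>
     (c_cl c w \<longrightarrow> c_onch c w \<noteq> None \<or> (w, c_st c w) \<in> c_txs c))"

definition honest_updates_in_transit :: "nat \<Rightarrow> nat set \<Rightarrow> cfg \<Rightarrow> bool" where
  "honest_updates_in_transit f B c \<longleftrightarrow> (\<forall>w i. w \<notin> B \<longrightarrow> w < nW f \<longrightarrow> \<not> c_cl c w \<longrightarrow>
     c_st c w < i \<longrightarrow> i \<le> c_lat c \<longrightarrow> (w, i) \<in> c_net c)"

definition brick_inv :: "nat \<Rightarrow> nat set \<Rightarrow> cfg \<Rightarrow> bool" where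
  "brick_inv f B c \<longleftrightarrow> wardens_in_range f c \<and> seqnos_in_range B c \<and> honest_signatures B c \<and>
     honest_closing B c \<and> honest_updates_in_transit f B c"

lemma brick_inv_init: "init c \<Longrightarrow> brick_inv f B c"
  by (auto simp: init_def brick_inv_def wardens_in_range_def seqnos_in_range_def ann_def
      honest_signatures_def honest_closing_def honest_updates_in_transit_def)

lemma wardens_in_range_step:
  "B \<subseteq> {..<nW f} \<Longrightarrow> step f B c a c' \<Longrightarrow> wardens_in_range f c \<Longrightarrow> wardens_in_range f c'"
  by (cases a) (auto simp: step_def wardens_in_range_def split: if_splits)

lemma seqnos_in_range_step: "step f B c a c' \<Longrightarrow> seqnos_in_range B c \<Longrightarrow> seqnos_in_range B c'"
  by (cases a) (auto simp: step_def seqnos_in_range_def ann_def split: if_splits)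

lemma honest_signatures_step:
  "step f B c a c' \<Longrightarrow> seqnos_in_range B c \<Longrightarrow> honest_signatures B c \<Longrightarrow> honest_signatures B c'"
  by (cases a) (auto simp: step_def honest_signatures_def seqnos_in_range_def le_Suc_eq split: if_splits)

lemma honest_closing_step: "step f B c a c' \<Longrightarrow> honest_closing B c \<Longrightarrow> honest_closing B c'"
  by (cases a) (auto simp: step_def honest_closing_def split: if_splits)

lemma honest_updates_in_transit_step:
  "step f B c a c' \<Longrightarrow> honest_updates_in_transit f B c \<Longrightarrow> honest_updates_in_transit f B c'"
  by (cases a) (auto simp: step_def honest_updates_in_transit_def split: if_splits)

lemma brick_inv_step:
  assumes "B \<subseteq> {..<nW f}" and step: "step f B c a c'" and "brick_inv f B c"
  shows "brick_inv f B c'"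
  using assms(3) wardens_in_range_step[OF assms(1) step] seqnos_in_range_step[OF step]
    honest_signatures_step[OF step] honest_closing_step[OF step] honest_updates_in_transit_step[OF step]
  by (simp add: brick_inv_def)

lemma signed_wardens: "brick_inv f B c \<Longrightarrow> c_sg c i \<subseteq> {..<nW f}"
  by (simp add: brick_inv_def wardens_in_range_def)

lemma finite_signed: "brick_inv f B c \<Longrightarrow> finite (c_sg c i)"
  by (rule finite_subset[OF signed_wardens]) simp_all

lemma onchain_wardens: "brick_inv f B c \<Longrightarrow> {w. c_onch c w \<noteq> None} \<subseteq> {..<nW f}"
  by (simp add: brick_inv_def wardens_in_range_def)

lemma ann_bounded: "brick_inv f B c \<Longrightarrow> ann c \<subseteq> {1..c_lat c}"
  by (simp add: brick_inv_def seqnos_in_range_def)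

lemma closing_state_bounded:
  assumes "brick_inv f B c" and "c_onch c w \<noteq> None"
  shows "Max (ann c) \<in> {1..c_lat c}"
proof -
  have "ann c \<noteq> {}" using assms(2) by (auto simp: ann_def)
  then show ?thesis using ann_bounded[OF assms(1)] by (meson Max_in finite_atLeastAtMost finite_subset subsetD)
qed

lemma quorums_intersect_honest:
  assumes "S \<subseteq> {..<nW f}" "T \<subseteq> {..<nW f}" "thr f \<le> card S" "thr f \<le> card T"
    and "finite B" "card B \<le> f"
  shows "\<exists>w\<in>S \<inter> T. w \<notin> B"
proof -
  have "finite S" "finite T" using finite_subset[OF assms(1)] finite_subset[OF assms(2)] by simp_all
  then have "card S + card T = card (S \<union> T) + card (S \<inter> T)" by (rule card_Un_Int)
  moreover have "card (S \<union> T) \<le> nW f" using card_mono[of "{..<nW f}" "S \<union> T"] assms(1,2) by simp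
  ultimately have "f < card (S \<inter> T)" using assms(3,4) unfolding thr_def nW_def by linarith
  moreover have "card (S \<inter> T) \<le> card B" if "S \<inter> T \<subseteq> B" using card_mono[OF assms(5) that] .
  ultimately have "\<not> S \<inter> T \<subseteq> B" using assms(6) by linarith
  then show ?thesis by blast
qed

lemma quorum_if_all_honest:
  assumes "B \<subseteq> {..<nW f}" "card B \<le> f" "{..<nW f} - B \<subseteq> S" "S \<subseteq> {..<nW f}"
  shows "thr f \<le> card S"
proof -
  have "finite B" using finite_subset[OF assms(1)] by simp
  then have "thr f \<le> card ({..<nW f} - B)"
    using assms(1,2) by (simp add: card_Diff_subset nW_def thr_def)
  also have "\<dots> \<le> card S" using assms(3,4) by (intro card_mono) (auto intro: finite_subset)
  finally show ?thesis .
qed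

lemma signed_le_closing_state:
  assumes inv: "brick_inv f B c" and "finite B" "card B \<le> f"
    and onchain: "thr f \<le> card {w. c_onch c w \<noteq> None}" and signed: "thr f \<le> card (c_sg c i)"
  shows "i \<le> Max (ann c)"
proof -
  obtain w where w: "w \<in> c_sg c i" "c_onch c w \<noteq> None" "w \<notin> B"
    using quorums_intersect_honest[OF _ _ signed onchain \<open>finite B\<close> \<open>card B \<le> f\<close>] inv
    unfolding brick_inv_def wardens_in_range_def by blast
  then obtain j where j: "c_onch c w = Some j" by blast
  have "i \<le> c_st c w" using inv w(1,3) by (auto simp: brick_inv_def honest_signatures_def)
  also have "\<dots> = j" using inv w(3) j by (auto simp: brick_inv_def honest_closing_def)
  also have "j \<le> Max (ann c)"
  proof (rule Max_ge)
    show "finite (ann c)" using finite_subset[OF ann_bounded[OF inv]] by simp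
    show "j \<in> ann c" using j by (auto simp: ann_def)
  qed
  finally show ?thesis .
qed

definition persistent :: "nat \<Rightarrow> nat set \<Rightarrow> (cfg \<Rightarrow> bool) \<Rightarrow> bool" where
  "persistent f B P \<longleftrightarrow> (\<forall>c a c'. step f B c a c' \<longrightarrow> P c \<longrightarrow> P c')"

lemma persistent_signed: "persistent f B (\<lambda>c. w \<in> c_sg c i)"
  by (auto simp: persistent_def step_def split: act.splits if_splits)

lemma persistent_onchain: "persistent f B (\<lambda>c. c_onch c w \<noteq> None)"
  by (auto simp: persistent_def step_def split: act.splits if_splits)

lemma persistent_closed: "persistent f B (\<lambda>c. c_closed c \<noteq> None)"
  by (auto simp: persistent_def step_def split: act.splits if_splits)

lemma persistent_stored_ge: "persistent f B (\<lambda>c. j \<le> c_st c w)"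
  by (auto simp: persistent_def step_def split: act.splits if_splits)

lemma persistent_warden_closed: "persistent f B (\<lambda>c. c_cl c w \<and> c_st c w = j)"
  by (auto simp: persistent_def step_def split: act.splits if_splits)

lemma persistent_requested: "w < nW f \<Longrightarrow> persistent f B (\<lambda>c. w \<in> c_req c \<or> c_cl c w)"
  unfolding persistent_def
proof (intro allI impI)
  fix c a c' assume "w < nW f" "step f B c a c'" "w \<in> c_req c \<or> c_cl c w"
  then show "w \<in> c_req c' \<or> c_cl c' w" by (cases a) (auto simp: step_def split: if_splits)
qed

lemma step_closes_by_Finalize:
  "step f B c a c' \<Longrightarrow> c_closed c = None \<Longrightarrow> c_closed c' \<noteq> None \<Longrightarrow>
     a = Finalize \<and> c_closed c' = Some (Max (ann c)) \<and> thr f \<le> card {w. c_onch c w \<noteq> None}"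
  by (cases a) (auto simp: step_def split: if_splits)

lemma step_latest_changes_when_committed:
  "step f B c a c' \<Longrightarrow> c_lat c' \<noteq> c_lat c \<Longrightarrow> c_lat c = 1 \<or> thr f \<le> card (c_sg c (c_lat c))"
  by (cases a) (auto simp: step_def split: if_splits)

lemma step_without_request_keeps_wardens_open:
  "step f B c a c' \<Longrightarrow> a \<noteq> Request \<Longrightarrow> c_req c = {} \<and> (\<forall>w. \<not> c_cl c w) \<Longrightarrow>
     c_req c' = {} \<and> (\<forall>w. \<not> c_cl c' w)"
  by (cases a) (auto simp: step_def split: if_splits)

lemma exists_step_leaving:
  fixes P :: "nat \<Rightarrow> bool"
  assumes "k \<le> n" "P k" "\<not> P n"
  shows "\<exists>p\<ge>k. P p \<and> \<not> P (Suc p)"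
  using assms by (induction n rule: dec_induct) (auto intro: le_SucI)

locale brick_execution =
  fixes f :: nat and B :: "nat set" and r :: "nat \<Rightarrow> cfg" and l :: "nat \<Rightarrow> act"
  assumes run: "brick_run f B r l"
    and byzantine_wardens: "B \<subseteq> {..<nW f}"
    and byzantine_bound: "card B \<le> f"
begin

lemma run_step: "step f B (r n) (l n) (r (Suc n))"
  using run by (simp add: brick_run_def)

lemma brick_inv_run: "brick_inv f B (r n)"
proof (induction n)
  case 0
  then show ?case using run brick_inv_init by (simp add: brick_run_def)
next
  case (Suc n)
  then show ?case using brick_inv_step[OF byzantine_wardens run_step] by blast
qed

lemma persistent_run:
  assumes "persistent f B P" "P (r n)" "n \<le> m"
  shows "P (r m)"
  using assms(3) by (induction m rule: dec_induct) (use assms run_step in \<open>auto simp: persistent_def\<close>)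

lemma persistent_eventually: "persistent f B P \<Longrightarrow> P (r n) \<Longrightarrow> eventually (\<lambda>m. P (r m)) sequentially"
  using persistent_run by (auto simp: eventually_sequentially)

lemma card_signed_mono: "n \<le> m \<Longrightarrow> card (c_sg (r n) i) \<le> card (c_sg (r m) i)"
  using persistent_run[OF persistent_signed] finite_signed[OF brick_inv_run] by (meson card_mono subsetI)

lemma fair_action_ensures:
  assumes "weakly_fair f B r l a"
    and "\<And>m. k \<le> m \<Longrightarrow> \<not> Q (r m) \<Longrightarrow> enabled f B (r m) a"
    and "\<And>m. k \<le> m \<Longrightarrow> \<not> Q (r m) \<Longrightarrow> step f B (r m) a (r (Suc m)) \<Longrightarrow> Q (r (Suc m))"
  shows "\<exists>m. Q (r m)"
proof (rule ccontr)
  assume never: "\<nexists>m. Q (r m)"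
  then obtain m where "k \<le> m" "l m = a"
    using assms(1,2) unfolding weakly_fair_def by blast
  then show False using assms(3) run_step never by metis
qed

lemma honest_warden_receives_request:
  assumes w: "w \<notin> B" "w < nW f" and request: "l k = Request"
  shows "\<exists>n. c_cl (r n) w"
proof -
  have "w \<in> c_req (r (Suc k))" using run_step[of k] request w(2) by (simp add: step_def)
  then have pending: "w \<in> c_req (r m) \<or> c_cl (r m) w" if "Suc k \<le> m" for m
    using persistent_run[OF persistent_requested[OF w(2)]] that by blast
  show ?thesis
  proof (rule fair_action_ensures[where a = "RecvReq w" and k = "Suc k"])
    show "weakly_fair f B r l (RecvReq w)" using run w(1) by (simp add: brick_run_def)
  next
    fix m assume "Suc k \<le> m" "\<not> c_cl (r m) w"
    then show "enabled f B (r m) (RecvReq w)" using pending w(1) by (auto simp: enabled_def step_def)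
  next
    fix m assume "step f B (r m) (RecvReq w) (r (Suc m))"
    then show "c_cl (r (Suc m)) w" by (auto simp: step_def split: if_splits)
  qed
qed

lemma honest_closing_reaches_chain:
  assumes w: "w \<notin> B" and closed: "c_cl (r n) w"
  shows "\<exists>m. c_onch (r m) w \<noteq> None"
proof -
  define j where "j = c_st (r n) w"
  have closed_at_j: "c_cl (r m) w \<and> c_st (r m) w = j" if "n \<le> m" for m
    by (rule persistent_run[OF persistent_warden_closed]) (use closed that in \<open>simp_all add: j_def\<close>)
  show ?thesis
  proof (rule fair_action_ensures[where a = "Include w j" and k = n])
    show "weakly_fair f B r l (Include w j)" using run w by (simp add: brick_run_def)
  next
    fix m assume "n \<le> m" "\<not> c_onch (r m) w \<noteq> None"
    moreover have "honest_closing B (r m)" using brick_inv_run by (simp add: brick_inv_def)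
    ultimately have "(w, j) \<in> c_txs (r m)"
      using closed_at_j[of m] w unfolding honest_closing_def by auto
    then show "enabled f B (r m) (Include w j)" by (simp add: enabled_def step_def)
  next
    fix m assume "step f B (r m) (Include w j) (r (Suc m))"
    then show "c_onch (r (Suc m)) w \<noteq> None" by (auto simp: step_def split: if_splits)
  qed
qed

lemma request_closes:
  assumes "l k = Request"
  shows "\<exists>n. c_closed (r n) \<noteq> None"
proof -
  let ?H = "{..<nW f} - B"
  have "\<forall>w\<in>?H. eventually (\<lambda>m. c_onch (r m) w \<noteq> None) sequentially"
    using honest_warden_receives_request[OF _ _ assms] honest_closing_reaches_chain
      persistent_eventually[OF persistent_onchain] by blast
  then have "eventually (\<lambda>m. \<forall>w\<in>?H. c_onch (r m) w \<noteq> None) sequentially"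
    by (intro eventually_ball_finite) auto
  then obtain K where K: "\<forall>m\<ge>K. \<forall>w\<in>?H. c_onch (r m) w \<noteq> None"
    by (auto simp: eventually_sequentially)
  show ?thesis
  proof (rule fair_action_ensures[where a = Finalize and k = K])
    show "weakly_fair f B r l Finalize" using run by (simp add: brick_run_def)
  next
    fix m assume "K \<le> m" "\<not> c_closed (r m) \<noteq> None"
    moreover have "thr f \<le> card {w. c_onch (r m) w \<noteq> None}"
      using K \<open>K \<le> m\<close>
      by (intro quorum_if_all_honest[OF byzantine_wardens byzantine_bound _ onchain_wardens[OF brick_inv_run]])
        auto
    ultimately show "enabled f B (r m) Finalize" by (simp add: enabled_def step_def)
  next
    fix m assume "step f B (r m) Finalize (r (Suc m))"
    then show "c_closed (r (Suc m)) \<noteq> None" by (simp add: step_def)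
  qed
qed

lemma wardens_open_without_request:
  assumes "\<And>n. l n \<noteq> Request"
  shows "\<not> c_cl (r n) w"
proof -
  have "c_req (r n) = {} \<and> (\<forall>w. \<not> c_cl (r n) w)"
  proof (induction n)
    case 0
    then show ?case using run by (simp add: brick_run_def init_def)
  next
    case (Suc n)
    then show ?case using step_without_request_keeps_wardens_open[OF run_step assms] by blast
  qed
  then show ?thesis by blast
qed

lemma honest_eventually_stores:
  assumes w: "w \<notin> B" "w < nW f" and not_closing: "\<And>n. \<not> c_cl (r n) w"
    and latest: "\<And>n. k \<le> n \<Longrightarrow> c_lat (r n) = L"
  shows "j \<le> L \<Longrightarrow> \<exists>n. j \<le> c_st (r n) w"
proof (induction j)
  case 0
  then show ?case by simp
next
  case (Suc j)
  then obtain n where "j \<le> c_st (r n) w" by auto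
  then have stored: "j \<le> c_st (r m) w" if "max k n \<le> m" for m
    using persistent_run[OF persistent_stored_ge] that by simp
  show ?case
  proof (rule fair_action_ensures[where a = "Deliver w (Suc j)" and k = "max k n"])
    show "weakly_fair f B r l (Deliver w (Suc j))" using run w(1) by (simp add: brick_run_def)
  next
    fix m assume m: "max k n \<le> m" "\<not> Suc j \<le> c_st (r m) w"
    then have "c_st (r m) w = j" using stored by fastforce
    moreover have "(w, Suc j) \<in> c_net (r m)"
      using brick_inv_run[of m] w not_closing latest m Suc.prems \<open>c_st (r m) w = j\<close>
      by (auto simp: brick_inv_def honest_updates_in_transit_def)
    ultimately show "enabled f B (r m) (Deliver w (Suc j))"
      using w not_closing by (simp add: enabled_def step_def)
  next
    fix m assume m: "max k n \<le> m" "\<not> Suc j \<le> c_st (r m) w"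
      and "step f B (r m) (Deliver w (Suc j)) (r (Suc m))"
    then show "Suc j \<le> c_st (r (Suc m)) w" using stored[OF m(1)] not_closing by (auto simp: step_def)
  qed
qed

lemma uncommitted_latest_stays:
  assumes "c_lat (r k) = L" "2 \<le> L" and uncommitted: "\<And>n. card (c_sg (r n) L) < thr f"
  shows "k \<le> n \<Longrightarrow> c_lat (r n) = L"
proof (induction n rule: dec_induct)
  case base
  then show ?case using assms(1) .
next
  case (step n)
  show ?case
  proof (rule ccontr)
    assume "c_lat (r (Suc n)) \<noteq> L"
    then have "c_lat (r n) = 1 \<or> thr f \<le> card (c_sg (r n) (c_lat (r n)))"
      using step_latest_changes_when_committed[OF run_step[of n]] step.IH by simp
    then show False using step.IH assms(2) uncommitted[of n] by simp
  qed
qed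

lemma never_closed_latest_signed:
  assumes never_closed: "\<And>n. c_closed (r n) = None"
    and latest: "\<And>n. k \<le> n \<Longrightarrow> c_lat (r n) = L" and "2 \<le> L"
  shows "\<exists>n. thr f \<le> card (c_sg (r n) L)"
proof -
  let ?H = "{..<nW f} - B"
  have "l n \<noteq> Request" for n using request_closes never_closed by metis
  then have not_closing: "\<not> c_cl (r n) w" for n w using wardens_open_without_request by blast
  have "\<forall>w\<in>?H. eventually (\<lambda>n. w \<in> c_sg (r n) L) sequentially"
  proof
    fix w assume "w \<in> ?H"
    then obtain n where "L \<le> c_st (r n) w"
      using honest_eventually_stores[OF _ _ not_closing latest] by blast
    then have "w \<in> c_sg (r n) L"
      using brick_inv_run[of n] \<open>w \<in> ?H\<close> \<open>2 \<le> L\<close> by (auto simp: brick_inv_def honest_signatures_def)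
    then show "eventually (\<lambda>n. w \<in> c_sg (r n) L) sequentially"
      using persistent_eventually[OF persistent_signed] by blast
  qed
  then have "eventually (\<lambda>n. \<forall>w\<in>?H. w \<in> c_sg (r n) L) sequentially"
    by (intro eventually_ball_finite) auto
  then obtain n where "?H \<subseteq> c_sg (r n) L"
    by (auto simp: eventually_sequentially)
  then show ?thesis
    using quorum_if_all_honest[OF byzantine_wardens byzantine_bound _ signed_wardens[OF brick_inv_run]]
    by blast
qed

lemma close_after_issue:
  assumes issue: "l k = Issue" and closes: "c_closed (r n) \<noteq> None"
    and latest: "\<And>m. Suc k \<le> m \<Longrightarrow> c_lat (r m) = L"
  shows "\<exists>m. c_closed (r m) \<in> {Some L, Some (L - 1)}"
proof -
  have still_open: "c_closed (r k) = None" and L: "L - 1 = c_lat (r k)"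
    and prev_committed: "c_lat (r k) = 1 \<or> thr f \<le> card (c_sg (r k) (c_lat (r k)))"
    using run_step[of k] issue latest[of "Suc k"] by (auto simp: step_def)
  have "c_closed (r (max k n)) \<noteq> None" using persistent_run[OF persistent_closed closes] by simp
  then obtain p where "k \<le> p" "c_closed (r p) = None" "c_closed (r (Suc p)) \<noteq> None"
    using exists_step_leaving[of k "max k n" "\<lambda>p. c_closed (r p) = None"] still_open by auto
  then have "l p = Finalize" and closing: "c_closed (r (Suc p)) = Some (Max (ann (r p)))"
    and quorum: "thr f \<le> card {w. c_onch (r p) w \<noteq> None}"
    using step_closes_by_Finalize[OF run_step] by blast+
  then have "k < p" using issue \<open>k \<le> p\<close> by (cases "p = k") auto
  have "0 < card {w. c_onch (r p) w \<noteq> None}" using quorum by (simp add: thr_def)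
  then obtain w where "c_onch (r p) w \<noteq> None" by (auto simp: card_gt_0_iff)
  then have bounds: "Max (ann (r p)) \<in> {1..L}"
    using closing_state_bounded[OF brick_inv_run[of p]] latest[of p] \<open>k < p\<close> by simp
  have "L - 1 \<le> Max (ann (r p))"
  proof (cases "c_lat (r k) = 1")
    case True
    then show ?thesis using L bounds by simp
  next
    case False
    then have "thr f \<le> card (c_sg (r p) (L - 1))"
      using prev_committed card_signed_mono[OF \<open>k \<le> p\<close>] L by (metis le_trans)
    then show ?thesis
      using signed_le_closing_state[OF brick_inv_run _ byzantine_bound quorum] byzantine_wardens
      by (meson finite_lessThan finite_subset)
  qed
  then have "c_closed (r (Suc p)) \<in> {Some L, Some (L - 1)}" using bounds closing by auto
  then show ?thesis by blast
qed

lemma issue_committed_or_invalidated: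
  assumes issue: "l k = Issue"
  shows "\<exists>n. committed f (r n) (c_lat (r (Suc k))) \<or> invalidated (r n) (c_lat (r (Suc k)))"
proof (rule ccontr)
  define L where "L = c_lat (r (Suc k))"
  assume "\<not> ?thesis"
  then have not_committed: "\<not> committed f (r n) L" and not_invalidated: "\<not> invalidated (r n) L" for n
    unfolding L_def by blast+
  have uncommitted: "card (c_sg (r n) L) < thr f" for n
    using not_committed[of n] unfolding committed_def by linarith
  have not_closed_near_L: "c_closed (r n) \<notin> {Some L, Some (L - 1)}" for n
    using not_committed[of n] not_invalidated[of n] unfolding committed_def invalidated_def by auto
  have "L = Suc (c_lat (r k))" using run_step[of k] issue by (simp add: step_def L_def)
  then have "2 \<le> L" using brick_inv_run[of k] by (simp add: brick_inv_def seqnos_in_range_def)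
  have latest: "c_lat (r n) = L" if "Suc k \<le> n" for n
    using uncommitted_latest_stays[OF L_def[symmetric] \<open>2 \<le> L\<close> uncommitted that] .
  show False
  proof (cases "\<exists>n. c_closed (r n) \<noteq> None")
    case True
    then show False using close_after_issue[OF issue _ latest] not_closed_near_L by blast
  next
    case False
    then obtain n where "thr f \<le> card (c_sg (r n) L)"
      using never_closed_latest_signed[OF _ latest \<open>2 \<le> L\<close>] by blast
    then show False using uncommitted[of n] by simp
  qed
qed

end

theorem theorem4:
  fixes f :: nat and B :: "nat set" and r :: "nat \<Rightarrow> cfg" and l :: "nat \<Rightarrow> act"
  assumes "B \<subseteq> {..<nW f}" and "card B \<le> f"
    and "brick_run f B r l"
  shows "(\<forall>k. l k = Issue \<longrightarrow>
            (\<exists>k'. committed f (r k') (c_lat (r (Suc k))) \<or> invalidated (r k') (c_lat (r (Suc k)))))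
       \<and> (\<forall>k. l k = Request \<longrightarrow> (\<exists>k'. c_closed (r k') \<noteq> None))"
proof -
  interpret brick_execution f B r l
    using assms by unfold_locales
  show ?thesis using issue_committed_or_invalidated request_closes by blast
qed

end
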